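(* Let $P_\star\in\mathcal{P}$, let $P_n$ be the empirical distribution of $n$ i.i.d. draws from $P_\star$, and let $\widehat P_n\in\mathcal{P}$ be an estimate of $P_\star$ that is independent of $P_n$. Write $\pi_n=\pi_{\widehat P_n}$, $\theta_{n,a}=\theta_{\widehat P_n,a}$, $\psi_n=\psi_{\widehat P_n}$, $\phi_n=\phi_{\widehat P_n}$, and define the remainder $\mathcal{R}_n=\psi_n+\mathbb{E}_{Z\sim P_\star}[\phi_n(Z)]-\psi_\star$ (with $\widehat P_n$ held fixed in the expectation). If (i) $\|\pi_n-\pi_\star\|_{L^2(P_{\star,X})}=O_p(n^{-\tau})$ for some scalar $\tau>0$, and (ii) $\|\theta_{n,a}-\theta_{\star,a}\|_{L^2(P_{\star,X};\mathcal{H})}=O_p(n^{-\gamma_a})$ for some scalar $\gamma_a>0$, for each $a\in\{0,1\}$, then $\|\mathcal{R}_n\|_{\mathcal{H}}=O_p\big(n^{-[\tau+\min\{\gamma_1,\gamma_0\}]}\big)$. In particular, if $\tau+\min\{\gamma_1,\gamma_0\}>1/2$, then $\|\mathcal{R}_n\|_{\mathcal{H}}=o_p(n^{-1/2})$.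
   Context: $\mathcal{X},\mathcal{Y}$ Polish; $\mathcal{Z}=\mathcal{X}\times\{0,1\}\times\mathcal{Y}$, $Z=(X,A,Y)$. $\mathcal{P}$ is a dominated, locally nonparametric collection of distributions on $\mathcal{Z}$ with $P_{Y\mid A,X}$ non-degenerate and strong positivity: fixed $\eta>0$ with $\eta\le\pi_P(x)\le1-\eta$ $P_X$-a.e. for all $P\in\mathcal{P}$, where $\pi_P(x)=P(A=1\mid X=x)$. $k,\ell$ bounded characteristic kernels with feature maps $K_x,L_y$; $\mathcal{H}=\mathcal{H}_\mathcal{X}\otimes\mathcal{H}_\mathcal{Y}$ real separable tensor-product RKHS with feature map $\Lambda_{x,y}=K_x\otimes L_y$. For $P\in\mathcal{P}$: $\theta_{P,a}(x)=K_x\otimes\mathbb{E}_P[L_Y\mid A=a,X=x]$, $\psi_P=\mathbb{E}_P[\theta_{P,1}(X)-\theta_{P,0}(X)]$, $\phi_P(x,a,y)=(\frac{a}{\pi_P(x)}-\frac{1-a}{1-\pi_P(x)})(\Lambda_{x,y}-\theta_{P,a}(x))+\theta_{P,1}(x)-\theta_{P,0}(x)-\psi_P$. Subscript $\star$ denotes evaluation at $P_\star$. $\|f\|^2_{L^2(P_{\star,X})}=\int f^2dP_{\star,X}$, $\|g\|^2_{L^2(P_{\star,X};\mathcal{H})}=\int\|g(x)\|^2_{\mathcal{H}}P_{\star,X}(dx)$. *)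

theory Defs
  imports "HOL-Probability.Probability"
begin

definition Zspace :: "('x::topological_space \<times> bool \<times> 'y::topological_space) measure" where
  "Zspace = borel \<Otimes>\<^sub>M (count_space UNIV \<Otimes>\<^sub>M borel)"

text \<open>A distribution P of Z = (X,A,Y) is described by its X-marginal P_X, the propensity
  score pi_P(x) = P(A = 1 | X = x), and the conditional laws P_{Y|A=a,X=x}.\<close>

record ('x, 'y) model =
  mX    :: "'x measure"
  mprop :: "'x \<Rightarrow> real"
  mcond :: "bool \<Rightarrow> 'x \<Rightarrow> 'y measure"

definition valid_model :: "('x::topological_space, 'y::topological_space) model \<Rightarrow> bool" where
  "valid_model P \<longleftrightarrow>
     prob_space (mX P) \<and> sets (mX P) = sets borel \<and>
     mprop P \<in> borel_measurable borel \<and> (\<forall>x. 0 \<le> mprop P x \<and> mprop P x \<le> 1) \<and>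
     (\<forall>a. mcond P a \<in> measurable borel (subprob_algebra borel)) \<and>
     (\<forall>a x. prob_space (mcond P a x) \<and> sets (mcond P a x) = sets borel)"

definition dist :: "('x::topological_space, 'y::topological_space) model \<Rightarrow> ('x \<times> bool \<times> 'y) measure" where
  "dist P = Giry_Monad.bind (mX P) (\<lambda>x.
             Giry_Monad.bind (measure_pmf (bernoulli_pmf (mprop P x))) (\<lambda>a.
               Giry_Monad.bind (mcond P a x) (\<lambda>y. return Zspace (x, a, y))))"

definition dominated :: "('x::topological_space, 'y::topological_space) model set \<Rightarrow> bool" where
  "dominated \<P> \<longleftrightarrow> (\<exists>\<mu>. sigma_finite_measure \<mu> \<and> sets \<mu> = sets Zspace \<and>
                        (\<forall>P\<in>\<P>. absolutely_continuous \<mu> (dist P)))"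

definition nondegenerate :: "('x::topological_space, 'y::topological_space) model \<Rightarrow> bool" where
  "nondegenerate P \<longleftrightarrow> (AE x in mX P. \<forall>a. \<not> (\<exists>y. mcond P a x = return borel y))"

text \<open>Strong positivity. pi_P is only determined P_X-a.e.; the model fixes the (always
  available) version of pi_P that satisfies the bound at every x.\<close>
definition strong_positivity :: "real \<Rightarrow> ('x::topological_space, 'y) model \<Rightarrow> bool" where
  "strong_positivity \<eta> P \<longleftrightarrow> (\<forall>x. \<eta> \<le> mprop P x \<and> mprop P x \<le> 1 - \<eta>)"

text \<open>K is a feature map of the kernel k into the RKHS H (modelled up to isometry as a
  real Hilbert space type in which the features span a dense subspace).\<close>
definition rkhs_feature_map :: "('x \<Rightarrow> 'x \<Rightarrow> real) \<Rightarrow> ('x \<Rightarrow> 'h::real_inner) \<Rightarrow> bool" where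
  "rkhs_feature_map k K \<longleftrightarrow> (\<forall>x x'. k x x' = inner (K x) (K x')) \<and> closure (span (range K)) = UNIV"

definition bounded_kernel :: "('x \<Rightarrow> 'x \<Rightarrow> real) \<Rightarrow> bool" where
  "bounded_kernel k \<longleftrightarrow> (\<exists>B. \<forall>x. k x x \<le> B)"

definition characteristic :: "('x::topological_space \<Rightarrow> 'h::{real_inner,banach,second_countable_topology}) \<Rightarrow> bool" where
  "characteristic K \<longleftrightarrow>
     (\<forall>P Q. prob_space P \<longrightarrow> prob_space Q \<longrightarrow> sets P = sets borel \<longrightarrow> sets Q = sets borel \<longrightarrow>
            integral\<^sup>L P K = integral\<^sup>L Q K \<longrightarrow> P = Q)"

definition tensor_product :: "('hx::real_inner \<Rightarrow> 'hy::real_inner \<Rightarrow> 'h::real_inner) \<Rightarrow> bool" where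
  "tensor_product tensor \<longleftrightarrow>
     (\<forall>u v u' v'. inner (tensor u v) (tensor u' v') = inner u u' * inner v v') \<and>
     closure (span (range (case_prod tensor))) = UNIV"

definition theta :: "('hx \<Rightarrow> 'hy \<Rightarrow> 'h) \<Rightarrow> ('x \<Rightarrow> 'hx) \<Rightarrow> ('y \<Rightarrow> 'hy::{banach,second_countable_topology})
    \<Rightarrow> ('x, 'y) model \<Rightarrow> bool \<Rightarrow> 'x \<Rightarrow> 'h" where
  "theta tensor K L P a x = tensor (K x) (integral\<^sup>L (mcond P a x) L)"

definition psi :: "('hx \<Rightarrow> 'hy \<Rightarrow> 'h::{banach,second_countable_topology}) \<Rightarrow> ('x \<Rightarrow> 'hx)
    \<Rightarrow> ('y \<Rightarrow> 'hy::{banach,second_countable_topology}) \<Rightarrow> ('x, 'y) model \<Rightarrow> 'h" where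
  "psi tensor K L P = (\<integral>x. theta tensor K L P True x - theta tensor K L P False x \<partial>mX P)"

definition phi :: "('hx \<Rightarrow> 'hy \<Rightarrow> 'h::{banach,second_countable_topology}) \<Rightarrow> ('x \<Rightarrow> 'hx)
    \<Rightarrow> ('y \<Rightarrow> 'hy::{banach,second_countable_topology}) \<Rightarrow> ('x, 'y) model \<Rightarrow> 'x \<times> bool \<times> 'y \<Rightarrow> 'h" where
  "phi tensor K L P z = (case z of (x, a, y) \<Rightarrow>
      ((if a then 1 else 0) / mprop P x - (if a then 0 else 1) / (1 - mprop P x))
        *\<^sub>R (tensor (K x) (L y) - theta tensor K L P a x)
      + theta tensor K L P True x - theta tensor K L P False x - psi tensor K L P)"

definition remainder :: "('hx \<Rightarrow> 'hy \<Rightarrow> 'h::{banach,second_countable_topology}) \<Rightarrow> ('x::topological_space \<Rightarrow> 'hx)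
    \<Rightarrow> ('y::topological_space \<Rightarrow> 'hy::{banach,second_countable_topology}) \<Rightarrow> ('x, 'y) model \<Rightarrow> ('x, 'y) model \<Rightarrow> 'h" where
  "remainder tensor K L Pstar Phat =
     psi tensor K L Phat + integral\<^sup>L (dist Pstar) (phi tensor K L Phat) - psi tensor K L Pstar"

definition L2_dist_prop :: "('x, 'y) model \<Rightarrow> ('x, 'y) model \<Rightarrow> real" where
  "L2_dist_prop Pstar P = sqrt (\<integral>x. (mprop P x - mprop Pstar x)\<^sup>2 \<partial>mX Pstar)"

definition L2_dist_theta :: "('hx \<Rightarrow> 'hy \<Rightarrow> 'h::real_normed_vector) \<Rightarrow> ('x \<Rightarrow> 'hx)
    \<Rightarrow> ('y \<Rightarrow> 'hy::{banach,second_countable_topology}) \<Rightarrow> ('x, 'y) model \<Rightarrow> ('x, 'y) model \<Rightarrow> bool \<Rightarrow> real" where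
  "L2_dist_theta tensor K L Pstar P a =
     sqrt (\<integral>x. (norm (theta tensor K L P a x - theta tensor K L Pstar a x))\<^sup>2 \<partial>mX Pstar)"

text \<open>Independence of two random elements with possibly different codomain types
  (the library's indep_var requires equal codomains).\<close>
definition indep_rv :: "'w measure \<Rightarrow> 'a measure \<Rightarrow> ('w \<Rightarrow> 'a) \<Rightarrow> 'b measure \<Rightarrow> ('w \<Rightarrow> 'b) \<Rightarrow> bool" where
  "indep_rv M S X T Y \<longleftrightarrow> X \<in> measurable M S \<and> Y \<in> measurable M T \<and>
     (\<forall>A\<in>sets S. \<forall>B\<in>sets T.
        measure M (X -` A \<inter> Y -` B \<inter> space M) = measure M (X -` A \<inter> space M) * measure M (Y -` B \<inter> space M))"

section \<open>Stochastic order symbols (outer-probability version, no measurability needed)\<close>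

definition bigOp :: "'w measure \<Rightarrow> (nat \<Rightarrow> 'w \<Rightarrow> real) \<Rightarrow> (nat \<Rightarrow> real) \<Rightarrow> bool" where
  "bigOp M X r \<longleftrightarrow> (\<forall>\<epsilon>>0. \<exists>C N. \<forall>n\<ge>N. \<exists>E\<in>sets M.
       measure M E \<ge> 1 - \<epsilon> \<and> (\<forall>\<omega>\<in>E. \<bar>X n \<omega>\<bar> \<le> C * r n))"

definition littleOp :: "'w measure \<Rightarrow> (nat \<Rightarrow> 'w \<Rightarrow> real) \<Rightarrow> (nat \<Rightarrow> real) \<Rightarrow> bool" where
  "littleOp M X r \<longleftrightarrow> (\<forall>\<delta>>0. \<forall>\<epsilon>>0. \<exists>N. \<forall>n\<ge>N. \<exists>E\<in>sets M.
       measure M E \<ge> 1 - \<epsilon> \<and> (\<forall>\<omega>\<in>E. \<bar>X n \<omega>\<bar> \<le> \<delta> * r n))"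

end

(* The remainder is a second-order term. Averaging phi_hat over A and Y under P_star
   turns the inverse propensity weights into the factors pi_star / pi_hat and
   (1 - pi_star) / (1 - pi_hat), and everything cancels except
     R = E_X [ (pi_star - pi_hat) ((theta_star1 - theta_hat1) / pi_hat
                                   + (theta_star0 - theta_hat0) / (1 - pi_hat)) ].
   Strong positivity and Cauchy-Schwarz then give the deterministic bound
     |R| <= (1/eta) |pi_hat - pi_star|_2 (|theta_hat1 - theta_star1|_2 + |theta_hat0 - theta_star0|_2),
   which, evaluated at the estimate P_hat_n, multiplies the two O_p rates. *)

theory Submission
  imports Defs
begin

section \<open>Tensor products and bounded feature maps\<close>

lemma tensor_product_inner:
  "tensor_product tensor \<Longrightarrow> inner (tensor u v) (tensor u' v') = inner u u' * inner v v'"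
  by (simp add: tensor_product_def)

lemma tensor_product_norm:
  assumes "tensor_product tensor"
  shows "norm (tensor u v) = norm u * norm v"
proof -
  have "(norm (tensor u v))\<^sup>2 = (norm u * norm v)\<^sup>2"
    by (simp add: power2_norm_eq_inner power_mult_distrib tensor_product_inner[OF assms])
  then show ?thesis by (simp add: power2_eq_iff_nonneg)
qed

lemma tensor_product_bounded_bilinear:
  assumes "tensor_product tensor"
  shows "bounded_bilinear tensor"
proof
  note T = tensor_product_inner[OF assms]
  \<comment> \<open>Each linearity law holds because the difference of its two sides has zero squared norm.\<close>
  have zero: "d = 0" if "inner d d = 0" for d :: 'c
    using that by simp
  fix u u' v v' and r :: real
  show "tensor (u + u') v = tensor u v + tensor u' v"
    using zero[of "tensor (u + u') v - (tensor u v + tensor u' v)"]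
    by (simp add: inner_add_left inner_add_right T algebra_simps)
  show "tensor u (v + v') = tensor u v + tensor u v'"
    using zero[of "tensor u (v + v') - (tensor u v + tensor u v')"]
    by (simp add: inner_add_left inner_add_right T algebra_simps)
  show "tensor (r *\<^sub>R u) v = r *\<^sub>R tensor u v"
    using zero[of "tensor (r *\<^sub>R u) v - r *\<^sub>R tensor u v"]
    by (simp add: T algebra_simps power2_eq_square)
  show "tensor u (r *\<^sub>R v) = r *\<^sub>R tensor u v"
    using zero[of "tensor u (r *\<^sub>R v) - r *\<^sub>R tensor u v"]
    by (simp add: T algebra_simps power2_eq_square)
next
  show "\<exists>K. \<forall>u v. norm (tensor u v) \<le> norm u * norm v * K"
    by (rule exI[of _ 1]) (simp add: tensor_product_norm[OF assms])
qed

lemma tensor_product_measurable: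
  fixes tensor :: "'a::{real_inner,second_countable_topology} \<Rightarrow> 'b::{real_inner,second_countable_topology}
      \<Rightarrow> 'c::{real_inner,second_countable_topology}"
  assumes "tensor_product tensor"
    and "f \<in> borel_measurable M" "g \<in> borel_measurable M"
  shows "(\<lambda>x. tensor (f x) (g x)) \<in> borel_measurable M"
  using assms(2,3) by (rule borel_measurable_continuous_Pair)
    (intro bounded_bilinear.continuous_on[OF tensor_product_bounded_bilinear[OF assms(1)]]
      continuous_on_fst continuous_on_snd continuous_on_id)

lemma rkhs_feature_map_norm_le:
  assumes "rkhs_feature_map k K" "k x x \<le> B"
  shows "norm (K x) \<le> sqrt B"
  using assms by (simp add: rkhs_feature_map_def norm_eq_sqrt_inner)

section \<open>Integration against kernels\<close>

lemma measurable_bernoulli_pmf: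
  assumes [measurable]: "p \<in> borel_measurable M" and p01: "\<And>x. 0 \<le> p x \<and> p x \<le> 1"
  shows "(\<lambda>x. measure_pmf (bernoulli_pmf (p x))) \<in> M \<rightarrow>\<^sub>M prob_algebra (count_space UNIV)"
proof (rule measurable_prob_algebraI)
  show "(\<lambda>x. measure_pmf (bernoulli_pmf (p x))) \<in> M \<rightarrow>\<^sub>M subprob_algebra (count_space UNIV)"
  proof (rule measurable_subprob_algebra)
    fix A :: "bool set"
    have pmf: "pmf (bernoulli_pmf (p x)) a = (if a then p x else 1 - p x)" for x a
      using p01[of x] by (cases a) auto
    have "(\<lambda>x. emeasure (measure_pmf (bernoulli_pmf (p x))) A) =
          (\<lambda>x. ennreal (\<Sum>a\<in>A. if a then p x else 1 - p x))"
      by (intro ext) (simp add: emeasure_measure_pmf_finite pmf)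
    also have "\<dots> \<in> borel_measurable M" by measurable
    finally show "(\<lambda>x. emeasure (measure_pmf (bernoulli_pmf (p x))) A) \<in> borel_measurable M" .
  qed (auto simp: subprob_space_measure_pmf)
qed (simp add: prob_space_measure_pmf)

lemma integral_bernoulli_pmf_vector:
  fixes f :: "bool \<Rightarrow> 'b::{banach,second_countable_topology}"
  assumes "0 \<le> p" "p \<le> 1"
  shows "(\<integral>a. f a \<partial>bernoulli_pmf p) = p *\<^sub>R f True + (1 - p) *\<^sub>R f False"
  using assms by (subst integral_measure_pmf[of UNIV]) (auto simp: UNIV_bool)

lemma integrable_bounded_prob_space:
  fixes f :: "'a \<Rightarrow> 'b::{banach,second_countable_topology}"
  assumes "prob_space M" "sets M = sets N" "f \<in> borel_measurable N" "\<And>z. z \<in> space N \<Longrightarrow> norm (f z) \<le> B"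
  shows "integrable M f"
proof (rule finite_measure.integrable_const_bound[where B=B])
  show "finite_measure M" using assms(1) by (simp add: prob_space_def)
  show "AE z in M. norm (f z) \<le> B"
    using assms(4) by (intro AE_I2) (simp add: sets_eq_imp_space_eq[OF assms(2)])
  show "f \<in> borel_measurable M"
    using assms(3) by (simp add: measurable_cong_sets[OF assms(2) refl])
qed

lemma integrable_kernel_integral:
  fixes f :: "'b \<Rightarrow> 'h::{banach,second_countable_topology}"
  assumes M: "prob_space M" and N[measurable]: "N \<in> M \<rightarrow>\<^sub>M prob_algebra K"
    and f[measurable]: "f \<in> borel_measurable K" and f_le: "\<And>z. z \<in> space K \<Longrightarrow> norm (f z) \<le> B"
  shows "integrable M (\<lambda>x. integral\<^sup>L (N x) f)"
proof (rule finite_measure.integrable_const_bound[where B=B])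
  show "finite_measure M" using M by (simp add: prob_space_def)
  have [measurable]: "N \<in> M \<rightarrow>\<^sub>M subprob_algebra K"
    using N by (rule measurable_prob_algebraD)
  show "(\<lambda>x. integral\<^sup>L (N x) f) \<in> borel_measurable M" by measurable
  have "norm (integral\<^sup>L (N x) f) \<le> B" if x: "x \<in> space M" for x
  proof -
    have N_prob: "prob_space (N x)" "sets (N x) = sets K"
      using measurable_space[OF N x] by (auto simp: space_prob_algebra)
    have "norm (integral\<^sup>L (N x) f) \<le> (\<integral>z. norm (f z) \<partial>N x)"
      by (rule integral_norm_bound)
    also have "\<dots> \<le> B"
      using integrable_bounded_prob_space[OF N_prob f f_le] f_le
      by (intro prob_space.integral_le_const[OF N_prob(1)] AE_I2)
         (simp_all add: sets_eq_imp_space_eq[OF N_prob(2)])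
    finally show ?thesis .
  qed
  then show "AE x in M. norm (integral\<^sup>L (N x) f) \<le> B" by simp
qed

lemma integral_bind_real_inner:
  fixes f :: "'b \<Rightarrow> 'h::{real_inner,banach,second_countable_topology}"
  assumes M: "prob_space M" and N[measurable]: "N \<in> M \<rightarrow>\<^sub>M prob_algebra K"
    and f[measurable]: "f \<in> borel_measurable K" and f_le: "\<And>z. z \<in> space K \<Longrightarrow> norm (f z) \<le> B"
  shows "integral\<^sup>L (M \<bind> N) f = (\<integral>x. integral\<^sup>L (N x) f \<partial>M)"
proof -
  have [measurable]: "N \<in> M \<rightarrow>\<^sub>M subprob_algebra K"
    using N by (rule measurable_prob_algebraD)
  have N_prob: "prob_space (N x)" "sets (N x) = sets K" if "x \<in> space M" for x
    using measurable_space[OF N that] by (auto simp: space_prob_algebra)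
  have M_space: "M \<in> space (prob_algebra M)"
    using M by (simp add: space_prob_algebra)
  have int_bind: "integrable (M \<bind> N) f"
    using integrable_bounded_prob_space[OF prob_space_bind'[OF M_space N] sets_bind'[OF M_space N] f f_le] .
  \<comment> \<open>The library's \<open>integral_bind\<close> is real-valued, so compare the two sides coordinatewise.\<close>
  have coord: "inner (integral\<^sup>L (M \<bind> N) f) e = inner (\<integral>x. integral\<^sup>L (N x) f \<partial>M) e" for e
  proof -
    have "inner (integral\<^sup>L (M \<bind> N) f) e = (\<integral>z. inner (f z) e \<partial>M \<bind> N)"
      using int_bind by simp
    also have "\<dots> = (\<integral>x. (\<integral>z. inner (f z) e \<partial>N x) \<partial>M)"
    proof (rule integral_bind[where B="B * norm e" and B'=1])
      show "finite_measure M" using M by (simp add: prob_space_def)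
      show "\<bar>inner (f z) e\<bar> \<le> B * norm e" if "z \<in> space K" for z
        using Cauchy_Schwarz_ineq2[of "f z" e] mult_right_mono[OF f_le[OF that] norm_ge_zero, of e]
        by linarith
      show "AE x in M. emeasure (N x) (space (N x)) \<le> ennreal 1"
        using N_prob by (simp add: prob_space.emeasure_space_1)
    qed measurable
    also have "\<dots> = (\<integral>x. inner (integral\<^sup>L (N x) f) e \<partial>M)"
      using integrable_bounded_prob_space[OF N_prob f f_le] by (intro Bochner_Integration.integral_cong) simp_all
    also have "\<dots> = inner (\<integral>x. integral\<^sup>L (N x) f \<partial>M) e"
      using integrable_kernel_integral[OF M N f f_le] by simp
    finally show ?thesis .
  qed
  define d where "d = integral\<^sup>L (M \<bind> N) f - (\<integral>x. integral\<^sup>L (N x) f \<partial>M)"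
  have "inner d d = 0"
    using coord[of d] by (simp add: d_def inner_diff_left)
  then show ?thesis by (simp add: d_def)
qed

lemma integrable_abs_mult_of_squares:
  fixes f g :: "'a \<Rightarrow> real"
  assumes [measurable]: "f \<in> borel_measurable M" "g \<in> borel_measurable M"
    and "integrable M (\<lambda>x. (f x)\<^sup>2)" "integrable M (\<lambda>x. (g x)\<^sup>2)"
  shows "integrable M (\<lambda>x. \<bar>f x * g x\<bar>)"
proof (rule Bochner_Integration.integrable_bound)
  show "integrable M (\<lambda>x. (f x)\<^sup>2 + (g x)\<^sup>2)"
    using assms(3,4) by (rule Bochner_Integration.integrable_add)
  have "\<bar>a * b\<bar> \<le> a\<^sup>2 + b\<^sup>2" for a b :: real
  proof -
    have "2 * \<bar>a\<bar> * \<bar>b\<bar> \<le> a\<^sup>2 + b\<^sup>2"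
      using sum_squares_bound[of "\<bar>a\<bar>" "\<bar>b\<bar>"] by simp
    moreover have "0 \<le> \<bar>a\<bar> * \<bar>b\<bar>" by simp
    ultimately show ?thesis unfolding abs_mult by linarith
  qed
  then show "AE x in M. norm \<bar>f x * g x\<bar> \<le> norm ((f x)\<^sup>2 + (g x)\<^sup>2)"
    by simp
qed measurable

lemma Cauchy_Schwarz_integral_abs:
  fixes f g :: "'a \<Rightarrow> real"
  assumes [measurable]: "f \<in> borel_measurable M" "g \<in> borel_measurable M"
    and f2: "integrable M (\<lambda>x. (f x)\<^sup>2)" and g2: "integrable M (\<lambda>x. (g x)\<^sup>2)"
  shows "(\<integral>x. \<bar>f x * g x\<bar> \<partial>M) \<le> sqrt (\<integral>x. (f x)\<^sup>2 \<partial>M) * sqrt (\<integral>x. (g x)\<^sup>2 \<partial>M)"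
proof -
  note fg = integrable_abs_mult_of_squares[OF assms]
  have "(\<integral>\<^sup>+x. ennreal \<bar>f x\<bar> * ennreal \<bar>g x\<bar> \<partial>M)\<^sup>2
      \<le> (\<integral>\<^sup>+x. (ennreal \<bar>f x\<bar>)\<^sup>2 \<partial>M) * (\<integral>\<^sup>+x. (ennreal \<bar>g x\<bar>)\<^sup>2 \<partial>M)"
    by (rule Cauchy_Schwarz_nn_integral) auto
  also have "(\<integral>\<^sup>+x. ennreal \<bar>f x\<bar> * ennreal \<bar>g x\<bar> \<partial>M) = ennreal (\<integral>x. \<bar>f x * g x\<bar> \<partial>M)"
    using nn_integral_eq_integral[OF fg] by (simp add: ennreal_mult' abs_mult)
  also have "(\<integral>\<^sup>+x. (ennreal \<bar>f x\<bar>)\<^sup>2 \<partial>M) = ennreal (\<integral>x. (f x)\<^sup>2 \<partial>M)"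
    using nn_integral_eq_integral[OF f2] by (simp add: ennreal_power)
  also have "(\<integral>\<^sup>+x. (ennreal \<bar>g x\<bar>)\<^sup>2 \<partial>M) = ennreal (\<integral>x. (g x)\<^sup>2 \<partial>M)"
    using nn_integral_eq_integral[OF g2] by (simp add: ennreal_power)
  finally have "(\<integral>x. \<bar>f x * g x\<bar> \<partial>M)\<^sup>2 \<le> (\<integral>x. (f x)\<^sup>2 \<partial>M) * (\<integral>x. (g x)\<^sup>2 \<partial>M)"
    by (simp add: ennreal_power ennreal_mult'[symmetric])
  then have "sqrt ((\<integral>x. \<bar>f x * g x\<bar> \<partial>M)\<^sup>2) \<le> sqrt ((\<integral>x. (f x)\<^sup>2 \<partial>M) * (\<integral>x. (g x)\<^sup>2 \<partial>M))"
    by (rule real_sqrt_le_mono)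
  then show ?thesis by (simp add: real_sqrt_mult)
qed

section \<open>Disintegration of the joint law\<close>

lemma valid_modelD:
  assumes "valid_model P"
  shows "prob_space (mX P)" "sets (mX P) = sets borel" "mprop P \<in> borel_measurable borel"
    "0 \<le> mprop P x" "mprop P x \<le> 1" "prob_space (mcond P a x)" "sets (mcond P a x) = sets borel"
    "mcond P a \<in> borel \<rightarrow>\<^sub>M prob_algebra borel"
  using assms by (auto simp: valid_model_def intro!: measurable_prob_algebraI)

lemma strong_positivityD:
  assumes "strong_positivity \<eta> Q"
  shows "\<eta> \<le> mprop Q x" "\<eta> \<le> 1 - mprop Q x"
  using assms[unfolded strong_positivity_def, rule_format, of x] by linarith+

lemma L2_dist_prop_nonneg: "0 \<le> L2_dist_prop P Q"
  unfolding L2_dist_prop_def by simp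

lemma L2_dist_theta_nonneg: "0 \<le> L2_dist_theta tensor K L P Q a"
  unfolding L2_dist_theta_def by simp

definition cond_law :: "('x::topological_space, 'y::topological_space) model \<Rightarrow> 'x \<Rightarrow> ('x \<times> bool \<times> 'y) measure" where
  "cond_law P x = measure_pmf (bernoulli_pmf (mprop P x)) \<bind> (\<lambda>a. mcond P a x \<bind> (\<lambda>y. return Zspace (x, a, y)))"

lemma dist_eq_bind_cond_law: "dist P = mX P \<bind> cond_law P"
  unfolding dist_def cond_law_def ..

lemma measurable_Zspace_tuple:
  assumes "sets N = sets (borel :: 'y::topological_space measure)"
  shows "(\<lambda>y. (x, a, y)) \<in> N \<rightarrow>\<^sub>M (Zspace :: ('x::topological_space \<times> bool \<times> 'y) measure)"
proof -
  have "(\<lambda>y. (x, a, y)) \<in> (borel :: 'y measure) \<rightarrow>\<^sub>M (Zspace :: ('x \<times> bool \<times> 'y) measure)"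
    unfolding Zspace_def by measurable
  then show ?thesis by (simp add: measurable_cong_sets[OF assms refl])
qed

lemma bind_return_Zspace_eq_distr:
  assumes "valid_model P"
  shows "mcond P a x \<bind> (\<lambda>y. return Zspace (x, a, y)) = distr (mcond P a x) Zspace (\<lambda>y. (x, a, y))"
  using valid_modelD(6,7)[OF assms]
  by (intro bind_return_distr') (auto simp: prob_space.not_empty measurable_Zspace_tuple)

lemma measurable_cond_law:
  assumes "valid_model P"
  shows "cond_law P \<in> (borel :: 'x::topological_space measure) \<rightarrow>\<^sub>M
           prob_algebra (Zspace :: ('x \<times> bool \<times> 'y::topological_space) measure)"
proof -
  note [measurable] = valid_modelD(3,8)[OF assms]
  have bernoulli: "(\<lambda>x. measure_pmf (bernoulli_pmf (mprop P x))) \<in> borel \<rightarrow>\<^sub>M prob_algebra (count_space UNIV)"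
    using valid_modelD(4,5)[OF assms] by (intro measurable_bernoulli_pmf) simp_all
  have "(\<lambda>(x, a). mcond P a x) = (\<lambda>(x, a). if a then mcond P True x else mcond P False x)"
    by (auto simp: fun_eq_iff)
  then have mcond2: "(\<lambda>(x, a). mcond P a x) \<in> (borel \<Otimes>\<^sub>M count_space UNIV) \<rightarrow>\<^sub>M prob_algebra borel"
    by simp
  have "(\<lambda>z. (fst (fst z), snd (fst z), snd z)) \<in>
      ((borel \<Otimes>\<^sub>M count_space UNIV) \<Otimes>\<^sub>M borel) \<rightarrow>\<^sub>M (Zspace :: ('x \<times> bool \<times> 'y) measure)"
    unfolding Zspace_def by measurable
  then have return: "(\<lambda>(xa, y). return Zspace (fst xa, snd xa, y)) \<in>
      ((borel \<Otimes>\<^sub>M count_space UNIV) \<Otimes>\<^sub>M borel) \<rightarrow>\<^sub>M prob_algebra (Zspace :: ('x \<times> bool \<times> 'y) measure)"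
    using measurable_compose[OF _ measurable_return_prob_space] by (simp add: case_prod_beta')
  have "(\<lambda>(x, a). mcond P a x \<bind> (\<lambda>y. return Zspace (x, a, y))) \<in>
      (borel \<Otimes>\<^sub>M count_space UNIV) \<rightarrow>\<^sub>M prob_algebra (Zspace :: ('x \<times> bool \<times> 'y) measure)"
    using measurable_bind_prob_space2[OF mcond2 return] by (simp add: case_prod_beta')
  from measurable_bind_prob_space2[OF bernoulli this] show ?thesis
    unfolding cond_law_def .
qed

lemma integral_dist:
  fixes g :: "'x::topological_space \<times> bool \<times> 'y::topological_space \<Rightarrow> 'h::{real_inner,banach,second_countable_topology}"
  assumes P: "valid_model P" and g[measurable]: "g \<in> borel_measurable Zspace" and g_le: "\<And>z. norm (g z) \<le> B"
  shows "integral\<^sup>L (dist P) g =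
    (\<integral>x. mprop P x *\<^sub>R (\<integral>y. g (x, True, y) \<partial>mcond P True x)
       + (1 - mprop P x) *\<^sub>R (\<integral>y. g (x, False, y) \<partial>mcond P False x) \<partial>mX P)"
proof -
  have "cond_law P \<in> mX P \<rightarrow>\<^sub>M prob_algebra Zspace"
    using measurable_cond_law[OF P] by (simp add: measurable_cong_sets[OF valid_modelD(2)[OF P] refl])
  then have "integral\<^sup>L (dist P) g = (\<integral>x. integral\<^sup>L (cond_law P x) g \<partial>mX P)"
    unfolding dist_eq_bind_cond_law using g_le by (rule integral_bind_real_inner[OF valid_modelD(1)[OF P] _ g])
  also have "\<dots> = (\<integral>x. mprop P x *\<^sub>R (\<integral>y. g (x, True, y) \<partial>mcond P True x)
       + (1 - mprop P x) *\<^sub>R (\<integral>y. g (x, False, y) \<partial>mcond P False x) \<partial>mX P)"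
  proof (rule Bochner_Integration.integral_cong[OF refl])
    fix x
    define k where "k a = distr (mcond P a x) Zspace (\<lambda>y. (x, a, y))" for a
    have k_prob: "k \<in> measure_pmf (bernoulli_pmf (mprop P x)) \<rightarrow>\<^sub>M prob_algebra Zspace"
      using valid_modelD(6,7)[OF P]
      by (auto simp: k_def space_prob_algebra measurable_Zspace_tuple prob_space.prob_space_distr)
    have k_integral: "integral\<^sup>L (k a) g = (\<integral>y. g (x, a, y) \<partial>mcond P a x)" for a
      unfolding k_def using valid_modelD(7)[OF P] by (intro integral_distr) (auto simp: measurable_Zspace_tuple)
    have "integral\<^sup>L (cond_law P x) g = (\<integral>a. integral\<^sup>L (k a) g \<partial>bernoulli_pmf (mprop P x))"
      unfolding cond_law_def bind_return_Zspace_eq_distr[OF P] k_def[symmetric]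
      using k_prob g_le by (intro integral_bind_real_inner[where B=B]) (auto simp: prob_space_measure_pmf)
    then show "integral\<^sup>L (cond_law P x) g = mprop P x *\<^sub>R (\<integral>y. g (x, True, y) \<partial>mcond P True x)
       + (1 - mprop P x) *\<^sub>R (\<integral>y. g (x, False, y) \<partial>mcond P False x)"
      using valid_modelD(4,5)[OF P] by (simp add: integral_bernoulli_pmf_vector k_integral)
  qed
  finally show ?thesis .
qed

section \<open>The remainder as a second-order term\<close>

locale bounded_feature_maps =
  fixes tensor :: "'hx::{real_inner,banach,second_countable_topology} \<Rightarrow> 'hy::{real_inner,banach,second_countable_topology}
      \<Rightarrow> 'h::{real_inner,banach,second_countable_topology}"
    and K :: "'x::topological_space \<Rightarrow> 'hx" and L :: "'y::topological_space \<Rightarrow> 'hy" and BK BL :: real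
  assumes tensor_product: "tensor_product tensor"
    and K_measurable[measurable]: "K \<in> borel_measurable borel"
    and L_measurable[measurable]: "L \<in> borel_measurable borel"
    and norm_K_le: "\<And>x. norm (K x) \<le> BK" and norm_L_le: "\<And>y. norm (L y) \<le> BL"
begin

declare tensor_product_measurable[OF tensor_product, measurable (raw)]

lemma BK_nonneg: "0 \<le> BK"
  using norm_K_le[of undefined] norm_ge_zero order_trans by blast

lemma norm_tensor_K_le: "norm (tensor (K x) v) \<le> BK * norm v"
  unfolding tensor_product_norm[OF tensor_product] by (intro mult_right_mono norm_K_le) simp

lemma integrable_mcond_L:
  assumes "valid_model P"
  shows "integrable (mcond P a x) L"
  using norm_L_le by (intro integrable_bounded_prob_space[OF valid_modelD(6,7)[OF assms], where B=BL]) auto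

lemma theta_measurable:
  assumes "valid_model P"
  shows "theta tensor K L P a \<in> borel_measurable borel"
proof -
  from measurable_compose[OF measurable_prob_algebraD[OF valid_modelD(8)[OF assms]]
      integral_measurable_subprob_algebra[OF L_measurable]]
  show ?thesis unfolding theta_def by measurable
qed

lemma norm_theta_le:
  assumes "valid_model P"
  shows "norm (theta tensor K L P a x) \<le> BK * BL"
proof -
  have "norm (integral\<^sup>L (mcond P a x) L) \<le> (\<integral>y. norm (L y) \<partial>mcond P a x)"
    by (rule integral_norm_bound)
  also have "\<dots> \<le> BL"
    using integrable_mcond_L[OF assms] norm_L_le
    by (intro prob_space.integral_le_const[OF valid_modelD(6)[OF assms]]) auto
  finally show ?thesis
    unfolding theta_def using norm_tensor_K_le BK_nonneg by (meson mult_left_mono order_trans)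
qed

lemma phi_measurable:
  assumes "valid_model Q"
  shows "phi tensor K L Q \<in> borel_measurable Zspace"
proof -
  have [measurable]: "mprop Q \<in> borel_measurable borel" "theta tensor K L Q a \<in> borel_measurable borel" for a
    using valid_modelD(3)[OF assms] theta_measurable[OF assms] by auto
  have "phi tensor K L Q = (\<lambda>z.
      ((if fst (snd z) then 1 else 0) / mprop Q (fst z) - (if fst (snd z) then 0 else 1) / (1 - mprop Q (fst z)))
        *\<^sub>R (tensor (K (fst z)) (L (snd (snd z))) -
             (if fst (snd z) then theta tensor K L Q True (fst z) else theta tensor K L Q False (fst z)))
      + theta tensor K L Q True (fst z) - theta tensor K L Q False (fst z) - psi tensor K L Q)"
    by (auto simp: fun_eq_iff phi_def)
  also have "\<dots> \<in> borel_measurable Zspace"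
    unfolding Zspace_def by measurable
  finally show ?thesis .
qed

lemma norm_phi_le:
  assumes "valid_model Q" "strong_positivity \<eta> Q" "\<eta> > 0"
  shows "norm (phi tensor K L Q z) \<le> (1 / \<eta> + 1) * (2 * BK * BL) + norm (psi tensor K L Q)"
proof -
  obtain x a y where z: "z = (x, a, y)" by (cases z) auto
  define w where "w = (if a then 1 else 0) / mprop Q x - (if a then 0 else 1) / (1 - mprop Q x)"
  from strong_positivityD[OF assms(2), of x] have w: "\<bar>w\<bar> \<le> 1 / \<eta>"
    using assms(3) by (cases a) (auto simp: w_def divide_simps)
  have tensor_le: "norm (tensor (K x) (L y)) \<le> BK * BL"
    using norm_tensor_K_le BK_nonneg norm_L_le by (meson mult_left_mono order_trans)
  have theta_le: "norm (theta tensor K L Q b x) \<le> BK * BL" for b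
    by (rule norm_theta_le[OF assms(1)])
  have "norm (tensor (K x) (L y) - theta tensor K L Q a x) \<le> 2 * BK * BL"
    using norm_triangle_ineq4[of "tensor (K x) (L y)" "theta tensor K L Q a x"] tensor_le theta_le[of a] by linarith
  with w have "norm (w *\<^sub>R (tensor (K x) (L y) - theta tensor K L Q a x)) \<le> 1 / \<eta> * (2 * BK * BL)"
    unfolding norm_scaleR real_norm_def using assms(3) by (intro mult_mono) auto
  moreover have "norm (theta tensor K L Q True x - theta tensor K L Q False x) \<le> 2 * BK * BL"
    using norm_triangle_ineq4[of "theta tensor K L Q True x" "theta tensor K L Q False x"] theta_le[of True] theta_le[of False] by linarith
  moreover have "phi tensor K L Q z = w *\<^sub>R (tensor (K x) (L y) - theta tensor K L Q a x)
      + (theta tensor K L Q True x - theta tensor K L Q False x) - psi tensor K L Q"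
    by (simp add: z phi_def w_def)
  ultimately show ?thesis
    using norm_triangle_ineq4[of "w *\<^sub>R (tensor (K x) (L y) - theta tensor K L Q a x)
        + (theta tensor K L Q True x - theta tensor K L Q False x)" "psi tensor K L Q"]
      norm_triangle_ineq[of "w *\<^sub>R (tensor (K x) (L y) - theta tensor K L Q a x)"
        "theta tensor K L Q True x - theta tensor K L Q False x"]
    by (simp add: distrib_right)
qed

end

definition remainder_integrand ::
    "('hx \<Rightarrow> 'hy \<Rightarrow> 'h::{real_normed_vector}) \<Rightarrow> ('x \<Rightarrow> 'hx) \<Rightarrow> ('y \<Rightarrow> 'hy::{banach,second_countable_topology})
      \<Rightarrow> ('x, 'y) model \<Rightarrow> ('x, 'y) model \<Rightarrow> 'x \<Rightarrow> 'h" where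
  "remainder_integrand tensor K L P Q x =
     ((mprop P x - mprop Q x) / mprop Q x) *\<^sub>R (theta tensor K L P True x - theta tensor K L Q True x)
   + ((mprop P x - mprop Q x) / (1 - mprop Q x)) *\<^sub>R (theta tensor K L P False x - theta tensor K L Q False x)"

lemma norm_remainder_integrand_le:
  assumes "strong_positivity \<eta> Q" "\<eta> > 0"
  shows "norm (remainder_integrand tensor K L P Q x) \<le> \<bar>mprop P x - mprop Q x\<bar> / \<eta> *
    (norm (theta tensor K L P True x - theta tensor K L Q True x)
     + norm (theta tensor K L P False x - theta tensor K L Q False x))"
proof -
  have weight_le: "\<bar>(mprop P x - mprop Q x) / q\<bar> \<le> \<bar>mprop P x - mprop Q x\<bar> / \<eta>" if "\<eta> \<le> q" for q
    using that assms(2) by (simp add: abs_div frac_le)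
  have "norm (remainder_integrand tensor K L P Q x)
      \<le> \<bar>(mprop P x - mprop Q x) / mprop Q x\<bar> * norm (theta tensor K L P True x - theta tensor K L Q True x)
        + \<bar>(mprop P x - mprop Q x) / (1 - mprop Q x)\<bar> * norm (theta tensor K L P False x - theta tensor K L Q False x)"
    unfolding remainder_integrand_def by (rule norm_triangle_le) (simp add: norm_triangle_ineq)
  also have "\<dots> \<le> \<bar>mprop P x - mprop Q x\<bar> / \<eta> * norm (theta tensor K L P True x - theta tensor K L Q True x)
        + \<bar>mprop P x - mprop Q x\<bar> / \<eta> * norm (theta tensor K L P False x - theta tensor K L Q False x)"
    using strong_positivityD[OF assms(1), of x] by (intro add_mono mult_right_mono weight_le) simp_all
  finally show ?thesis by (simp add: distrib_left)
qed

context bounded_feature_maps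
begin

lemma integral_mcond_phi:
  assumes P: "valid_model P" and Q: "valid_model Q"
  shows "(\<integral>y. phi tensor K L Q (x, a, y) \<partial>mcond P a x) =
    ((if a then 1 else 0) / mprop Q x - (if a then 0 else 1) / (1 - mprop Q x))
      *\<^sub>R (theta tensor K L P a x - theta tensor K L Q a x)
    + (theta tensor K L Q True x - theta tensor K L Q False x - psi tensor K L Q)"
proof -
  define w where "w = (if a then 1 else 0) / mprop Q x - (if a then 0 else 1) / (1 - mprop Q x)"
  define c where "c = theta tensor K L Q True x - theta tensor K L Q False x - psi tensor K L Q"
  have lin: "bounded_linear (tensor (K x))"
    by (rule bounded_bilinear.bounded_linear_right[OF tensor_product_bounded_bilinear[OF tensor_product]])
  have int: "integrable (mcond P a x) (\<lambda>y. tensor (K x) (L y))"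
    by (rule integrable_bounded_linear[OF lin integrable_mcond_L[OF P]])
  have "(\<integral>y. phi tensor K L Q (x, a, y) \<partial>mcond P a x)
      = (\<integral>y. w *\<^sub>R (tensor (K x) (L y) - theta tensor K L Q a x) + c \<partial>mcond P a x)"
    by (simp add: phi_def w_def c_def algebra_simps)
  also have "\<dots> = w *\<^sub>R ((\<integral>y. tensor (K x) (L y) \<partial>mcond P a x) - theta tensor K L Q a x) + c"
    using int valid_modelD(6)[OF P]
    by (simp add: prob_space.prob_space finite_measure.integrable_const prob_space_def)
  also have "(\<integral>y. tensor (K x) (L y) \<partial>mcond P a x) = theta tensor K L P a x"
    unfolding theta_def by (rule integral_bounded_linear[OF lin integrable_mcond_L[OF P]])
  finally show ?thesis unfolding w_def c_def .
qed

lemma integrable_remainder_integrand: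
  assumes P: "valid_model P" and Q: "valid_model Q" and pos: "strong_positivity \<eta> Q" "\<eta> > 0"
  shows "integrable (mX P) (remainder_integrand tensor K L P Q)"
proof (rule integrable_bounded_prob_space[where B="1 / \<eta> * (4 * BK * BL)"])
  show "prob_space (mX P)" "sets (mX P) = sets borel"
    using valid_modelD(1,2)[OF P] .
  note [measurable] = valid_modelD(3)[OF P] valid_modelD(3)[OF Q]
  note [measurable] = theta_measurable[OF P] theta_measurable[OF Q]
  show "remainder_integrand tensor K L P Q \<in> borel_measurable borel"
    unfolding remainder_integrand_def[abs_def] by measurable
  fix x
  have weight: "\<bar>mprop P x - mprop Q x\<bar> / \<eta> \<le> 1 / \<eta>"
    using valid_modelD(4,5)[OF P, of x] valid_modelD(4,5)[OF Q, of x] pos(2)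
    by (intro divide_right_mono) (auto simp: abs_le_iff)
  have theta_diff: "norm (theta tensor K L P a x - theta tensor K L Q a x) \<le> 2 * BK * BL" for a
    using norm_triangle_ineq4[of "theta tensor K L P a x" "theta tensor K L Q a x"]
      norm_theta_le[OF P, of a x] norm_theta_le[OF Q, of a x] by linarith
  have "\<bar>mprop P x - mprop Q x\<bar> / \<eta> *
      (norm (theta tensor K L P True x - theta tensor K L Q True x)
       + norm (theta tensor K L P False x - theta tensor K L Q False x)) \<le> 1 / \<eta> * (4 * BK * BL)"
    using pos(2) by (intro mult_mono weight) (use theta_diff[of True] theta_diff[of False] in auto)
  then show "norm (remainder_integrand tensor K L P Q x) \<le> 1 / \<eta> * (4 * BK * BL)"
    using norm_remainder_integrand_le[OF pos, of tensor K L P x] by linarith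
qed

lemma remainder_eq_integral:
  assumes P: "valid_model P" and Q: "valid_model Q" and pos: "strong_positivity \<eta> Q" "\<eta> > 0"
  shows "remainder tensor K L P Q = (\<integral>x. remainder_integrand tensor K L P Q x \<partial>mX P)"
proof -
  define \<Theta> where "\<Theta> x = theta tensor K L P True x - theta tensor K L P False x" for x
  define c where "c a x = (\<integral>y. phi tensor K L Q (x, a, y) \<partial>mcond P a x)" for a x
  have int_\<Theta>: "integrable (mX P) \<Theta>"
  proof (rule integrable_bounded_prob_space[OF valid_modelD(1,2)[OF P]])
    show "\<Theta> \<in> borel_measurable borel"
      unfolding \<Theta>_def[abs_def] using theta_measurable[OF P] by measurable
    show "norm (\<Theta> x) \<le> 2 * BK * BL" for x
      using norm_triangle_ineq4[of "theta tensor K L P True x" "theta tensor K L P False x"]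
        norm_theta_le[OF P, of True x] norm_theta_le[OF P, of False x] unfolding \<Theta>_def by linarith
  qed
  have "integral\<^sup>L (dist P) (phi tensor K L Q) =
      (\<integral>x. mprop P x *\<^sub>R c True x + (1 - mprop P x) *\<^sub>R c False x \<partial>mX P)"
    unfolding c_def using phi_measurable[OF Q] norm_phi_le[OF Q pos] by (rule integral_dist[OF P])
  also have "\<dots> = (\<integral>x. remainder_integrand tensor K L P Q x + \<Theta> x - psi tensor K L Q \<partial>mX P)"
  proof (rule Bochner_Integration.integral_cong[OF refl])
    fix x
    have "mprop Q x \<noteq> 0" "1 - mprop Q x \<noteq> 0"
      using strong_positivityD[OF pos(1), of x] pos(2) by auto
    then have ratios: "mprop P x / mprop Q x = (mprop P x - mprop Q x) / mprop Q x + 1"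
      "(1 - mprop P x) / (1 - mprop Q x) = 1 - (mprop P x - mprop Q x) / (1 - mprop Q x)"
      by (simp_all add: field_simps)
    then show "mprop P x *\<^sub>R c True x + (1 - mprop P x) *\<^sub>R c False x
        = remainder_integrand tensor K L P Q x + \<Theta> x - psi tensor K L Q"
      unfolding c_def integral_mcond_phi[OF P Q] remainder_integrand_def \<Theta>_def
      by (simp add: algebra_simps) (simp add: ratios scaleR_add_left scaleR_diff_left)
  qed
  also have "\<dots> = (\<integral>x. remainder_integrand tensor K L P Q x \<partial>mX P) + (\<integral>x. \<Theta> x \<partial>mX P) - psi tensor K L Q"
    using integrable_remainder_integrand[OF P Q pos] int_\<Theta> valid_modelD(1)[OF P]
    by (simp add: prob_space.prob_space prob_space_def finite_measure.integrable_const)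
  also have "(\<integral>x. \<Theta> x \<partial>mX P) = psi tensor K L P"
    unfolding psi_def \<Theta>_def ..
  finally show ?thesis
    unfolding remainder_def by simp
qed

lemma cross_term_Cauchy_Schwarz:
  assumes P: "valid_model P" and Q: "valid_model Q"
  shows "integrable (mX P) (\<lambda>x. \<bar>mprop P x - mprop Q x\<bar> * norm (theta tensor K L P a x - theta tensor K L Q a x))"
    and "(\<integral>x. \<bar>mprop P x - mprop Q x\<bar> * norm (theta tensor K L P a x - theta tensor K L Q a x) \<partial>mX P)
      \<le> L2_dist_prop P Q * L2_dist_theta tensor K L P Q a"
proof -
  define c where "c x = \<bar>mprop P x - mprop Q x\<bar> * norm (theta tensor K L P a x - theta tensor K L Q a x)" for x
  define \<delta> where "\<delta> x = mprop Q x - mprop P x" for x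
  define N where "N x = norm (theta tensor K L Q a x - theta tensor K L P a x)" for x
  note [measurable] = valid_modelD(3)[OF P] valid_modelD(3)[OF Q]
  note [measurable] = theta_measurable[OF P] theta_measurable[OF Q]
  have \<delta>_measurable[measurable]: "\<delta> \<in> borel_measurable borel"
    unfolding \<delta>_def[abs_def] by measurable
  have N_measurable[measurable]: "N \<in> borel_measurable borel"
    unfolding N_def[abs_def] by measurable
  have \<delta>_le: "\<bar>\<delta> x\<bar> \<le> 1" for x
    using valid_modelD(4,5)[OF P, of x] valid_modelD(4,5)[OF Q, of x] unfolding \<delta>_def by linarith
  have N_le: "N x \<le> 2 * BK * BL" for x
    using norm_triangle_ineq4[of "theta tensor K L Q a x" "theta tensor K L P a x"]
      norm_theta_le[OF P, of a x] norm_theta_le[OF Q, of a x] unfolding N_def by linarith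
  have N_nonneg: "0 \<le> N x" for x
    unfolding N_def by simp
  have c_eq: "c = (\<lambda>x. \<bar>\<delta> x * N x\<bar>)"
    by (simp add: fun_eq_iff c_def \<delta>_def N_def abs_mult abs_minus_commute norm_minus_commute)
  note integrable = integrable_bounded_prob_space[OF valid_modelD(1,2)[OF P]]
  have \<delta>2: "integrable (mX P) (\<lambda>x. (\<delta> x)\<^sup>2)"
  proof (rule integrable[where B=1])
    show "norm ((\<delta> x)\<^sup>2) \<le> 1" for x
      using \<delta>_le[of x] by (simp add: abs_square_le_1)
  qed measurable
  have N2: "integrable (mX P) (\<lambda>x. (N x)\<^sup>2)"
  proof (rule integrable[where B="(2 * BK * BL)\<^sup>2"])
    show "norm ((N x)\<^sup>2) \<le> (2 * BK * BL)\<^sup>2" for x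
      using power_mono[OF N_le N_nonneg, where n=2] by simp
  qed measurable
  have on_mX: "f \<in> borel_measurable (mX P)" if "f \<in> borel_measurable borel" for f :: "'x \<Rightarrow> real"
    using that unfolding measurable_cong_sets[OF valid_modelD(2)[OF P] refl] .
  note square_integrable = on_mX[OF \<delta>_measurable] on_mX[OF N_measurable] \<delta>2 N2
  show "integrable (mX P) (\<lambda>x. \<bar>mprop P x - mprop Q x\<bar> * norm (theta tensor K L P a x - theta tensor K L Q a x))"
    unfolding c_def[symmetric] c_eq by (rule integrable_abs_mult_of_squares[OF square_integrable])
  have "integral\<^sup>L (mX P) c \<le> sqrt (\<integral>x. (\<delta> x)\<^sup>2 \<partial>mX P) * sqrt (\<integral>x. (N x)\<^sup>2 \<partial>mX P)"
    unfolding c_eq by (rule Cauchy_Schwarz_integral_abs[OF square_integrable])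
  then show "(\<integral>x. \<bar>mprop P x - mprop Q x\<bar> * norm (theta tensor K L P a x - theta tensor K L Q a x) \<partial>mX P)
      \<le> L2_dist_prop P Q * L2_dist_theta tensor K L P Q a"
    unfolding c_def[symmetric] by (simp add: L2_dist_prop_def L2_dist_theta_def \<delta>_def N_def)
qed

lemma norm_remainder_le:
  assumes P: "valid_model P" and Q: "valid_model Q" and pos: "strong_positivity \<eta> Q" "\<eta> > 0"
  shows "norm (remainder tensor K L P Q)
    \<le> 1 / \<eta> * L2_dist_prop P Q * (L2_dist_theta tensor K L P Q True + L2_dist_theta tensor K L P Q False)"
proof -
  define c where "c a x = \<bar>mprop P x - mprop Q x\<bar> * norm (theta tensor K L P a x - theta tensor K L Q a x)" for a x
  have c_integrable: "integrable (mX P) (c a)"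
    and c_le: "integral\<^sup>L (mX P) (c a) \<le> L2_dist_prop P Q * L2_dist_theta tensor K L P Q a" for a
    using cross_term_Cauchy_Schwarz[OF P Q, of a] by (simp_all add: c_def[abs_def])
  have "norm (remainder tensor K L P Q) \<le> (\<integral>x. norm (remainder_integrand tensor K L P Q x) \<partial>mX P)"
    unfolding remainder_eq_integral[OF P Q pos] by (rule integral_norm_bound)
  also have "\<dots> \<le> (\<integral>x. 1 / \<eta> * (c True x + c False x) \<partial>mX P)"
  proof (rule integral_mono)
    show "integrable (mX P) (\<lambda>x. norm (remainder_integrand tensor K L P Q x))"
      using integrable_remainder_integrand[OF P Q pos] by (rule integrable_norm)
    show "integrable (mX P) (\<lambda>x. 1 / \<eta> * (c True x + c False x))"
      by (intro integrable_mult_right Bochner_Integration.integrable_add c_integrable)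
    show "norm (remainder_integrand tensor K L P Q x) \<le> 1 / \<eta> * (c True x + c False x)" for x
      using norm_remainder_integrand_le[OF pos, of tensor K L P x] by (simp add: c_def algebra_simps)
  qed
  also have "\<dots> = 1 / \<eta> * (integral\<^sup>L (mX P) (c True) + integral\<^sup>L (mX P) (c False))"
    using c_integrable by simp
  also have "\<dots> \<le> 1 / \<eta> * (L2_dist_prop P Q * L2_dist_theta tensor K L P Q True
                            + L2_dist_prop P Q * L2_dist_theta tensor K L P Q False)"
    using pos(2) by (intro mult_left_mono add_mono c_le) simp_all
  finally show ?thesis
    by (simp add: distrib_left)
qed

end

section \<open>Stochastic order symbols\<close>

lemma (in prob_space) prob_Int_ge:
  assumes "A \<in> events" "B \<in> events"
  shows "prob A + prob B - 1 \<le> prob (A \<inter> B)"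
proof -
  have "prob (A \<union> B) = prob A + prob B - prob (A \<inter> B)"
    using assms by (intro measure_Un3) (auto simp: fmeasurable_eq_sets)
  moreover have "prob (A \<union> B) \<le> 1" by (rule prob_le_1)
  ultimately show ?thesis by linarith
qed

lemma bigOp_jointE:
  assumes M: "prob_space M" and X: "bigOp M X r" and Y: "bigOp M Y s"
    and r: "\<And>n. 0 \<le> r n" and s: "\<And>n. 0 \<le> s n" and \<epsilon>: "\<epsilon> > 0"
  obtains C D N where "0 \<le> C" "0 \<le> D"
    "\<And>n. n \<ge> N \<Longrightarrow> \<exists>E\<in>sets M. 1 - \<epsilon> \<le> measure M E \<and> (\<forall>\<omega>\<in>E. \<bar>X n \<omega>\<bar> \<le> C * r n \<and> \<bar>Y n \<omega>\<bar> \<le> D * s n)"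
proof -
  from X \<epsilon> obtain C N1 where C: "\<And>n. n \<ge> N1 \<Longrightarrow>
      \<exists>E\<in>sets M. 1 - \<epsilon> / 2 \<le> measure M E \<and> (\<forall>\<omega>\<in>E. \<bar>X n \<omega>\<bar> \<le> C * r n)"
    unfolding bigOp_def by (meson half_gt_zero)
  from Y \<epsilon> obtain D N2 where D: "\<And>n. n \<ge> N2 \<Longrightarrow>
      \<exists>E\<in>sets M. 1 - \<epsilon> / 2 \<le> measure M E \<and> (\<forall>\<omega>\<in>E. \<bar>Y n \<omega>\<bar> \<le> D * s n)"
    unfolding bigOp_def by (meson half_gt_zero)
  show ?thesis
  proof (rule that[of "max C 0" "max D 0" "max N1 N2"])
    fix n assume "max N1 N2 \<le> n"
    then obtain E1 E2 where E1: "E1 \<in> sets M" "1 - \<epsilon> / 2 \<le> measure M E1" "\<forall>\<omega>\<in>E1. \<bar>X n \<omega>\<bar> \<le> C * r n"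
      and E2: "E2 \<in> sets M" "1 - \<epsilon> / 2 \<le> measure M E2" "\<forall>\<omega>\<in>E2. \<bar>Y n \<omega>\<bar> \<le> D * s n"
      using C D by (metis max.bounded_iff)
    have "1 - \<epsilon> \<le> measure M (E1 \<inter> E2)"
      using prob_space.prob_Int_ge[OF M E1(1) E2(1)] E1(2) E2(2) by linarith
    moreover have "\<bar>X n \<omega>\<bar> \<le> max C 0 * r n \<and> \<bar>Y n \<omega>\<bar> \<le> max D 0 * s n" if "\<omega> \<in> E1 \<inter> E2" for \<omega>
      using that E1(3) E2(3) mult_right_mono[OF max.cobounded1[of C 0] r[of n]]
        mult_right_mono[OF max.cobounded1[of D 0] s[of n]]
      by (meson IntD1 IntD2 order_trans)
    ultimately show "\<exists>E\<in>sets M. 1 - \<epsilon> \<le> measure M E \<and>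
        (\<forall>\<omega>\<in>E. \<bar>X n \<omega>\<bar> \<le> max C 0 * r n \<and> \<bar>Y n \<omega>\<bar> \<le> max D 0 * s n)"
      using E1(1) E2(1) by blast
  qed simp_all
qed

lemma bigOp_add:
  assumes "prob_space M" "bigOp M X r" "bigOp M Y r" "\<And>n. 0 \<le> r n"
  shows "bigOp M (\<lambda>n \<omega>. X n \<omega> + Y n \<omega>) r"
  unfolding bigOp_def
proof (intro allI impI)
  fix \<epsilon> :: real assume "\<epsilon> > 0"
  with bigOp_jointE[OF assms(1-3) assms(4) assms(4)] obtain C D N where CD:
    "\<And>n. n \<ge> N \<Longrightarrow> \<exists>E\<in>sets M. 1 - \<epsilon> \<le> measure M E \<and> (\<forall>\<omega>\<in>E. \<bar>X n \<omega>\<bar> \<le> C * r n \<and> \<bar>Y n \<omega>\<bar> \<le> D * r n)"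
    by metis
  have "\<bar>x + y\<bar> \<le> (C + D) * r n" if "\<bar>x\<bar> \<le> C * r n" "\<bar>y\<bar> \<le> D * r n" for x y :: real and n
    using abs_triangle_ineq[of x y] that by (simp add: distrib_right)
  with CD show "\<exists>C N. \<forall>n\<ge>N. \<exists>E\<in>sets M. 1 - \<epsilon> \<le> measure M E \<and> (\<forall>\<omega>\<in>E. \<bar>X n \<omega> + Y n \<omega>\<bar> \<le> C * r n)"
    by meson
qed

lemma bigOp_mult:
  assumes "prob_space M" "bigOp M X r" "bigOp M Y s" "\<And>n. 0 \<le> r n" "\<And>n. 0 \<le> s n"
  shows "bigOp M (\<lambda>n \<omega>. X n \<omega> * Y n \<omega>) (\<lambda>n. r n * s n)"
  unfolding bigOp_def
proof (intro allI impI)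
  fix \<epsilon> :: real assume "\<epsilon> > 0"
  with bigOp_jointE[OF assms] obtain C D N where CD: "0 \<le> C" "0 \<le> D"
    "\<And>n. n \<ge> N \<Longrightarrow> \<exists>E\<in>sets M. 1 - \<epsilon> \<le> measure M E \<and> (\<forall>\<omega>\<in>E. \<bar>X n \<omega>\<bar> \<le> C * r n \<and> \<bar>Y n \<omega>\<bar> \<le> D * s n)"
    by metis
  have "\<bar>x * y\<bar> \<le> (C * D) * (r n * s n)" if "\<bar>x\<bar> \<le> C * r n" "\<bar>y\<bar> \<le> D * s n" for x y :: real and n
    using mult_mono[OF that] CD(1,2) assms(4,5) by (simp add: abs_mult mult_ac)
  with CD(3) show "\<exists>C N. \<forall>n\<ge>N. \<exists>E\<in>sets M. 1 - \<epsilon> \<le> measure M E \<and>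
      (\<forall>\<omega>\<in>E. \<bar>X n \<omega> * Y n \<omega>\<bar> \<le> C * (r n * s n))"
    by meson
qed

lemma bigOp_dominated:
  assumes "bigOp M Y r" "\<And>n \<omega>. \<omega> \<in> space M \<Longrightarrow> \<bar>X n \<omega>\<bar> \<le> c * \<bar>Y n \<omega>\<bar>" "0 \<le> c"
  shows "bigOp M X r"
  unfolding bigOp_def
proof (intro allI impI)
  fix \<epsilon> :: real assume "\<epsilon> > 0"
  with assms(1) obtain C N where
    CN: "\<And>n. n \<ge> N \<Longrightarrow> \<exists>E\<in>sets M. 1 - \<epsilon> \<le> measure M E \<and> (\<forall>\<omega>\<in>E. \<bar>Y n \<omega>\<bar> \<le> C * r n)"
    unfolding bigOp_def by meson
  have "\<bar>X n \<omega>\<bar> \<le> (c * C) * r n" if "\<omega> \<in> E" "E \<in> sets M" "\<bar>Y n \<omega>\<bar> \<le> C * r n" for E n \<omega>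
    using assms(2)[of \<omega> n] mult_left_mono[OF that(3) assms(3)] sets.sets_into_space[OF that(2)] that(1)
    by (auto simp: mult_ac)
  with CN show "\<exists>C N. \<forall>n\<ge>N. \<exists>E\<in>sets M. 1 - \<epsilon> \<le> measure M E \<and> (\<forall>\<omega>\<in>E. \<bar>X n \<omega>\<bar> \<le> C * r n)"
    by meson
qed

lemma bigOp_rate_mono:
  assumes "bigOp M X r" "\<And>n. 0 \<le> r n" "\<And>n. r n \<le> s n"
  shows "bigOp M X s"
  unfolding bigOp_def
proof (intro allI impI)
  fix \<epsilon> :: real assume "\<epsilon> > 0"
  with assms(1) obtain C N where
    CN: "\<And>n. n \<ge> N \<Longrightarrow> \<exists>E\<in>sets M. 1 - \<epsilon> \<le> measure M E \<and> (\<forall>\<omega>\<in>E. \<bar>X n \<omega>\<bar> \<le> C * r n)"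
    unfolding bigOp_def by meson
  have "C * r n \<le> max C 0 * s n" for n
    using mult_right_mono[OF max.cobounded1[of C 0] assms(2)[of n]]
      mult_left_mono[OF assms(3)[of n] max.cobounded2[of 0 C]] by linarith
  with CN show "\<exists>C N. \<forall>n\<ge>N. \<exists>E\<in>sets M. 1 - \<epsilon> \<le> measure M E \<and> (\<forall>\<omega>\<in>E. \<bar>X n \<omega>\<bar> \<le> C * s n)"
    by (meson order_trans)
qed

lemma powr_neg_mono_nat: "b \<le> a \<Longrightarrow> real n powr (- a) \<le> real n powr (- b)"
  by (cases "n = 0") (simp_all add: powr_mono)

lemma bigOp_powr_product:
  assumes M: "prob_space M" and A: "bigOp M A (\<lambda>n. real n powr (- a))"
    and B1: "bigOp M B1 (\<lambda>n. real n powr (- b1))" and B0: "bigOp M B0 (\<lambda>n. real n powr (- b0))"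
    and X: "\<And>n \<omega>. \<omega> \<in> space M \<Longrightarrow> \<bar>X n \<omega>\<bar> \<le> c * \<bar>A n \<omega> * (B1 n \<omega> + B0 n \<omega>)\<bar>" and c: "0 \<le> c"
  shows "bigOp M X (\<lambda>n. real n powr (- (a + min b1 b0)))"
proof -
  have "bigOp M B (\<lambda>n. real n powr (- min b1 b0))" if "bigOp M B (\<lambda>n. real n powr (- b))" "min b1 b0 \<le> b" for B b
    using that by (elim bigOp_rate_mono) (simp_all add: powr_neg_mono_nat)
  with B1 B0 have "bigOp M (\<lambda>n \<omega>. B1 n \<omega> + B0 n \<omega>) (\<lambda>n. real n powr (- min b1 b0))"
    by (intro bigOp_add[OF M]) simp_all
  then have "bigOp M (\<lambda>n \<omega>. A n \<omega> * (B1 n \<omega> + B0 n \<omega>)) (\<lambda>n. real n powr (- a) * real n powr (- min b1 b0))"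
    by (rule bigOp_mult[OF M A]) simp_all
  also have "(\<lambda>n. real n powr (- a) * real n powr (- min b1 b0)) = (\<lambda>n. real n powr (- (a + min b1 b0)))"
    by (simp add: fun_eq_iff powr_add[symmetric])
  finally show ?thesis
    using X c by (rule bigOp_dominated)
qed

lemma bigOp_powr_imp_littleOp:
  assumes "bigOp M X (\<lambda>n. real n powr (- s))" "s > 1/2"
  shows "littleOp M X (\<lambda>n. real n powr (- 1/2))"
  unfolding littleOp_def
proof (intro allI impI)
  fix \<delta> \<epsilon> :: real assume \<delta>: "\<delta> > 0" and "\<epsilon> > 0"
  with assms(1) obtain C N where CN: "\<And>n. n \<ge> N \<Longrightarrow>
      \<exists>E\<in>sets M. 1 - \<epsilon> \<le> measure M E \<and> (\<forall>\<omega>\<in>E. \<bar>X n \<omega>\<bar> \<le> C * real n powr (- s))"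
    unfolding bigOp_def by meson
  have "((\<lambda>n. max C 0 * real n powr (- (s - 1/2))) \<longlongrightarrow> max C 0 * 0) sequentially"
    using assms(2) by (intro tendsto_mult tendsto_const tendsto_neg_powr filterlim_real_sequentially) simp
  then have "eventually (\<lambda>n. max C 0 * real n powr (- (s - 1/2)) < \<delta>) sequentially"
    using order_tendstoD(2) \<delta> by fastforce
  then obtain N' where N': "\<And>n. n \<ge> N' \<Longrightarrow> max C 0 * real n powr (- (s - 1/2)) < \<delta>"
    unfolding eventually_sequentially by blast
  have rate: "C * real n powr (- s) \<le> \<delta> * real n powr (- 1/2)" if "n \<ge> N'" for n
  proof -
    have "C * real n powr (- s) \<le> max C 0 * real n powr (- s)"
      by (intro mult_right_mono) simp_all
    also have "\<dots> = (max C 0 * real n powr (- (s - 1/2))) * real n powr (- 1/2)"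
      by (simp add: powr_add[symmetric])
    also have "\<dots> \<le> \<delta> * real n powr (- 1/2)"
      using less_imp_le[OF N'[OF that]] by (intro mult_right_mono) simp_all
    finally show ?thesis .
  qed
  show "\<exists>N. \<forall>n\<ge>N. \<exists>E\<in>sets M. 1 - \<epsilon> \<le> measure M E \<and> (\<forall>\<omega>\<in>E. \<bar>X n \<omega>\<bar> \<le> \<delta> * real n powr (- 1/2))"
  proof (intro exI[of _ "max N N'"] allI impI)
    fix n assume n: "max N N' \<le> n"
    with CN obtain E where "E \<in> sets M" "1 - \<epsilon> \<le> measure M E" "\<forall>\<omega>\<in>E. \<bar>X n \<omega>\<bar> \<le> C * real n powr (- s)"
      by auto
    with rate[of n] n show "\<exists>E\<in>sets M. 1 - \<epsilon> \<le> measure M E \<and> (\<forall>\<omega>\<in>E. \<bar>X n \<omega>\<bar> \<le> \<delta> * real n powr (- 1/2))"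
      by (meson max.bounded_iff order_trans)
  qed
qed

theorem lemmaF3:
  fixes k :: "'x::polish_space \<Rightarrow> 'x \<Rightarrow> real" and K :: "'x \<Rightarrow> 'hx::{real_inner,banach,second_countable_topology}"
    and l :: "'y::polish_space \<Rightarrow> 'y \<Rightarrow> real" and L :: "'y \<Rightarrow> 'hy::{real_inner,banach,second_countable_topology}"
    and tensor :: "'hx \<Rightarrow> 'hy \<Rightarrow> 'h::{real_inner,banach,second_countable_topology}"
    and \<P> :: "('x, 'y) model set" and \<eta> :: real and Pstar :: "('x, 'y) model"
    and M :: "'w measure" and Zs :: "nat \<Rightarrow> 'w \<Rightarrow> 'x \<times> bool \<times> 'y"
    and S :: "'v measure" and V :: "nat \<Rightarrow> 'w \<Rightarrow> 'v" and Est :: "nat \<Rightarrow> 'v \<Rightarrow> ('x, 'y) model"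
    and \<tau> \<gamma>1 \<gamma>0 :: real
  assumes kK: "rkhs_feature_map k K" "bounded_kernel k" "K \<in> borel_measurable borel" "characteristic K"
    and lL: "rkhs_feature_map l L" "bounded_kernel l" "L \<in> borel_measurable borel" "characteristic L"
    and tens: "tensor_product tensor"
    and eta: "\<eta> > 0"
    and model: "\<forall>P\<in>\<P>. valid_model P \<and> nondegenerate P \<and> strong_positivity \<eta> P"
    and dom: "dominated \<P>"
    and Pstar: "Pstar \<in> \<P>"
    and M: "prob_space M"
    and Zs_meas: "\<forall>i. Zs i \<in> measurable M Zspace"
    and Zs_law: "\<forall>i. distr M Zspace (Zs i) = dist Pstar"
    and Zs_indep: "prob_space.indep_vars M (\<lambda>_. Zspace) Zs UNIV"
    and V_meas: "\<forall>n. V n \<in> measurable M S"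
    and Est_in: "\<forall>n. \<forall>v\<in>space S. Est n v \<in> \<P>"
    and V_indep: "\<forall>n. indep_rv M S (V n) (PiM {..<n} (\<lambda>_. Zspace)) (\<lambda>\<omega>. \<lambda>i\<in>{..<n}. Zs i \<omega>)"
    and tau: "\<tau> > 0" and gamma: "\<gamma>1 > 0" "\<gamma>0 > 0"
    and rate_pi: "bigOp M (\<lambda>n \<omega>. L2_dist_prop Pstar (Est n (V n \<omega>))) (\<lambda>n. real n powr (- \<tau>))"
    and rate_theta1: "bigOp M (\<lambda>n \<omega>. L2_dist_theta tensor K L Pstar (Est n (V n \<omega>)) True) (\<lambda>n. real n powr (- \<gamma>1))"
    and rate_theta0: "bigOp M (\<lambda>n \<omega>. L2_dist_theta tensor K L Pstar (Est n (V n \<omega>)) False) (\<lambda>n. real n powr (- \<gamma>0))"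
  shows "bigOp M (\<lambda>n \<omega>. norm (remainder tensor K L Pstar (Est n (V n \<omega>))))
            (\<lambda>n. real n powr (- (\<tau> + min \<gamma>1 \<gamma>0)))
       \<and> (\<tau> + min \<gamma>1 \<gamma>0 > 1/2 \<longrightarrow>
            littleOp M (\<lambda>n \<omega>. norm (remainder tensor K L Pstar (Est n (V n \<omega>)))) (\<lambda>n. real n powr (- 1/2)))"
proof -
  \<comment> \<open>The bound on the remainder holds for every fixed estimate.\<close>
  obtain Bk Bl where "\<And>x. k x x \<le> Bk" "\<And>y. l y y \<le> Bl"
    using kK(2) lL(2) unfolding bounded_kernel_def by blast
  then interpret bounded_feature_maps tensor K L "sqrt Bk" "sqrt Bl"
    using tens kK(1,3) lL(1,3) by unfold_locales (auto intro: rkhs_feature_map_norm_le)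
  define Q where "Q n \<omega> = Est n (V n \<omega>)" for n \<omega>
  have Q: "valid_model (Q n \<omega>)" "strong_positivity \<eta> (Q n \<omega>)" if "\<omega> \<in> space M" for n \<omega>
    using model Est_in measurable_space[OF V_meas[rule_format] that] unfolding Q_def by blast+
  have "bigOp M (\<lambda>n \<omega>. norm (remainder tensor K L Pstar (Q n \<omega>))) (\<lambda>n. real n powr (- (\<tau> + min \<gamma>1 \<gamma>0)))"
  proof (rule bigOp_powr_product[OF M rate_pi[folded Q_def] rate_theta1[folded Q_def] rate_theta0[folded Q_def]])
    fix n \<omega> assume "\<omega> \<in> space M"
    with norm_remainder_le[OF _ Q eta] model Pstar
    show "\<bar>norm (remainder tensor K L Pstar (Q n \<omega>))\<bar> \<le> 1 / \<eta> * \<bar>L2_dist_prop Pstar (Q n \<omega>) *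
        (L2_dist_theta tensor K L Pstar (Q n \<omega>) True + L2_dist_theta tensor K L Pstar (Q n \<omega>) False)\<bar>"
      by (simp add: L2_dist_prop_nonneg L2_dist_theta_nonneg)
  qed (use eta in simp)
  then show ?thesis
    using bigOp_powr_imp_littleOp unfolding Q_def by blast
qed

end
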